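(* Let $Y$ be a real Banach space with a finite-dimensional decomposition $(Q_j)_{j\ge1}$ and let $X$ be a closed subspace of $Y$. Then for every $\delta>0$ there exists an invertible bounded operator $T:Y\to Y$ with $\|T-I\|<\delta$ such that $X$ satisfies the density condition with respect to the FDD $(TQ_jT^{-1})_{j\ge1}$.
   Context: A finite-dimensional decomposition (FDD) of $Y$ is a sequence of finite-rank projections $(Q_j)_{j\ge1}$ with $Q_iQ_j=0$ for $i\ne j$ and $y=\sum_j Q_jy$ for all $y\in Y$. A subspace $X$ of $Y$ satisfies the density condition with respect to the FDD $(Q_j)$ if there is a dense subset $D$ of $X$ such that for every $x\in D$ there is $n=n(x)\in\mathbb N$ with $x=\sum_{j=1}^nQ_jx$. *)

theory Defs
  imports "HOL-Analysis.Analysis"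
begin

text \<open>Finite-dimensional decomposition, indexed by j \<ge> 1 (the value at 0 is ignored).\<close>
definition is_FDD :: "(nat \<Rightarrow> 'a::real_normed_vector \<Rightarrow> 'a) \<Rightarrow> bool" where
  "is_FDD Q \<longleftrightarrow>
     (\<forall>j\<ge>1. bounded_linear (Q j) \<and> Q j \<circ> Q j = Q j \<and>
             (\<exists>B. finite B \<and> range (Q j) \<subseteq> span B)) \<and>
     (\<forall>i\<ge>1. \<forall>j\<ge>1. i \<noteq> j \<longrightarrow> (\<forall>y. Q i (Q j y) = 0)) \<and>
     (\<forall>y. (\<lambda>n. \<Sum>j\<in>{1..n}. Q j y) \<longlonglongrightarrow> y)"

definition density_condition :: "'a::real_normed_vector set \<Rightarrow> (nat \<Rightarrow> 'a \<Rightarrow> 'a) \<Rightarrow> bool" where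
  "density_condition X Q \<longleftrightarrow>
     (\<exists>D. D \<subseteq> X \<and> X \<subseteq> closure D \<and>
          (\<forall>x\<in>D. \<exists>n::nat. x = (\<Sum>j\<in>{1..n}. Q j x)))"

end

theory Submission
  imports Defs
begin

text \<open>
  Let F be the subspace of vectors with a finite expansion
  x = Q 1 x + ... + Q n x; it is dense. The space is separable, so X contains a dense sequence x k.
  Using the finite-rank partial sum operators we find bounded functionals phi k with phi i (x k) = 0
  for k < i and phi k (x k) = 1 whenever x k is linearly independent of its predecessors. Choosing
  small correction vectors d k recursively, the operator S y = y + sum k. phi k y d k is close to the
  identity and maps every x k, hence the span D of the sequence, into F. Then T = inverse of S is close
  to the identity and D witnesses the density condition for the FDD (T Q j T^-1).
\<close>

lemma scaled_vector_off_closed_span: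
  fixes b :: "'a::real_normed_vector"
  assumes closed: "closed (span F)" and b: "b \<notin> span F"
  shows "infdist b (span F) > 0"
    and "\<And>k w. w \<in> span F \<Longrightarrow> \<bar>k\<bar> * infdist b (span F) \<le> norm (k *\<^sub>R b + w)"
proof -
  show dpos: "infdist b (span F) > 0"
    using infdist_pos_not_in_closed[OF closed] b span_zero by auto
  fix k w assume w: "w \<in> span F"
  show "\<bar>k\<bar> * infdist b (span F) \<le> norm (k *\<^sub>R b + w)"
  proof (cases "k = 0")
    case False
    have "- (1/k) *\<^sub>R w \<in> span F" using w by (simp add: span_scale span_neg)
    then have "infdist b (span F) \<le> dist b (- (1/k) *\<^sub>R w)" by (rule infdist_le)
    also have "\<dots> = norm (k *\<^sub>R b + w) / \<bar>k\<bar>"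
    proof -
      have "b + (1/k) *\<^sub>R w = (1/k) *\<^sub>R (k *\<^sub>R b + w)" using False by (simp add: algebra_simps)
      then show ?thesis by (simp add: dist_norm)
    qed
    finally show ?thesis using False by (simp add: field_simps)
  qed simp
qed

text \<open>A closed span stays closed when one vector is added: coefficients of b along a Cauchy
  sequence form a Cauchy sequence of reals.\<close>
lemma closed_span_insert:
  fixes b :: "'a::real_normed_vector"
  assumes closed: "closed (span F)"
  shows "closed (span (insert b F))"
proof (cases "b \<in> span F")
  case True
  then show ?thesis using closed by (simp add: span_redundant)
next
  case False
  define d where "d = infdist b (span F)"
  have dpos: "d > 0" and sep: "\<And>k w. w \<in> span F \<Longrightarrow> \<bar>k\<bar> * d \<le> norm (k *\<^sub>R b + w)"
    using scaled_vector_off_closed_span[OF closed False] by (auto simp: d_def)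
  show ?thesis
  proof (rule closed_sequential_limits[THEN iffD2], intro allI impI, elim conjE)
    fix s l assume s: "\<forall>n. s n \<in> span (insert b F)" and sl: "s \<longlonglongrightarrow> l"
    have "\<forall>n. \<exists>k. s n - k *\<^sub>R b \<in> span F" using s span_breakdown_eq by blast
    then obtain t where t: "\<And>n. s n - t n *\<^sub>R b \<in> span F" by metis
    have "Cauchy t"
    proof (rule metric_CauchyI)
      fix e :: real assume "e > 0"
      then obtain N where N: "\<forall>m\<ge>N. \<forall>n\<ge>N. dist (s m) (s n) < e * d"
        using LIMSEQ_imp_Cauchy[OF sl] dpos unfolding Cauchy_def by (meson mult_pos_pos)
      have "dist (t m) (t n) < e" if "m \<ge> N" "n \<ge> N" for m n
      proof -
        have "(s m - t m *\<^sub>R b) - (s n - t n *\<^sub>R b) \<in> span F" using t by (simp add: span_diff)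
        then have "\<bar>t m - t n\<bar> * d \<le> norm ((t m - t n) *\<^sub>R b + ((s m - t m *\<^sub>R b) - (s n - t n *\<^sub>R b)))"
          by (rule sep)
        also have "\<dots> = dist (s m) (s n)" by (simp add: dist_norm algebra_simps)
        also have "\<dots> < e * d" using N that by blast
        finally show ?thesis using dpos by (simp add: dist_real_def)
      qed
      then show "\<exists>N. \<forall>m\<ge>N. \<forall>n\<ge>N. dist (t m) (t n) < e" by blast
    qed
    then obtain \<tau> where "t \<longlonglongrightarrow> \<tau>" using Cauchy_convergent_iff convergent_def by blast
    then have "(\<lambda>n. s n - t n *\<^sub>R b) \<longlonglongrightarrow> l - \<tau> *\<^sub>R b" by (intro tendsto_intros sl)
    then have "l - \<tau> *\<^sub>R b \<in> span F" by (rule closed_sequentially[OF closed t])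
    then show "l \<in> span (insert b F)" using span_breakdown_eq by blast
  qed
qed

lemma closed_span_finite:
  fixes W :: "'a::real_normed_vector set"
  assumes "finite W"
  shows "closed (span W)"
  using assms by (induction W rule: finite_induct) (auto intro: closed_span_insert)

lemma representation_insert:
  fixes F :: "'a::real_vector set"
  assumes ind: "independent (insert b F)" and bF: "b \<notin> F" and w: "w \<in> span F"
  shows "representation (insert b F) (k *\<^sub>R b + w) v = (if v = b then k else representation F w v)"
proof -
  have bs: "b \<in> span (insert b F)" by (simp add: span_base)
  have ws: "w \<in> span (insert b F)" using w span_mono[of F "insert b F"] by auto
  have "representation (insert b F) (k *\<^sub>R b + w) v
        = k * representation (insert b F) b v + representation (insert b F) w v"
    using representation_add[OF ind, of w "k *\<^sub>R b"] representation_scale[OF ind bs]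
    by (simp add: ws span_scale bs)
  also have "\<dots> = (if v = b then k else 0) + representation F w v"
    using representation_basis[OF ind, of b] representation_extend[OF ind w subset_insertI] by auto
  also have "\<dots> = (if v = b then k else representation F w v)"
    using bF representation_ne_zero by fastforce
  finally show ?thesis .
qed

lemma representation_bounded:
  fixes W :: "'a::real_normed_vector set"
  assumes "finite W" "independent W"
  shows "\<exists>C\<ge>0. \<forall>x\<in>span W. \<forall>v. \<bar>representation W x v\<bar> \<le> C * norm x"
  using assms
proof (induction W rule: finite_induct)
  case empty
  then show ?case by (auto simp: representation_zero)
next
  case (insert b F)
  have indF: "independent F" and bF: "b \<notin> span F"
    using insert.prems insert.hyps by (auto simp: independent_insert)
  obtain C' where C': "C' \<ge> 0" "\<And>x v. x \<in> span F \<Longrightarrow> \<bar>representation F x v\<bar> \<le> C' * norm x"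
    using insert.IH[OF indF] by blast
  define d where "d = infdist b (span F)"
  have dpos: "d > 0" and sep: "\<And>k w. w \<in> span F \<Longrightarrow> \<bar>k\<bar> * d \<le> norm (k *\<^sub>R b + w)"
    using scaled_vector_off_closed_span[OF closed_span_finite[OF insert.hyps(1)] bF] by (auto simp: d_def)
  define C where "C = max (1/d) (C' * (1 + norm b / d))"
  have "\<bar>representation (insert b F) x v\<bar> \<le> C * norm x" if x: "x \<in> span (insert b F)" for x v
  proof -
    obtain k where "x - k *\<^sub>R b \<in> span F" using x span_breakdown_eq by blast
    moreover define w where "w = x - k *\<^sub>R b"
    ultimately have w: "w \<in> span F" by simp
    have xe: "x = k *\<^sub>R b + w" by (simp add: w_def)
    have "\<bar>k\<bar> * d \<le> norm x" using sep[OF w] by (simp add: xe)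
    then have k: "\<bar>k\<bar> \<le> norm x / d" using dpos by (simp add: field_simps)
    show ?thesis
    proof (cases "v = b")
      case True
      have "\<bar>representation (insert b F) x v\<bar> = \<bar>k\<bar>"
        using representation_insert[OF insert.prems insert.hyps(2) w] True by (simp add: xe)
      also have "\<dots> \<le> (1/d) * norm x" using k by simp
      also have "\<dots> \<le> C * norm x" unfolding C_def by (intro mult_right_mono) auto
      finally show ?thesis .
    next
      case False
      have "norm w \<le> norm x + \<bar>k\<bar> * norm b" unfolding w_def
        using norm_triangle_ineq4[of x "k *\<^sub>R b"] by simp
      also have "\<dots> \<le> (1 + norm b / d) * norm x"
        using mult_right_mono[OF k norm_ge_zero[of b]] by (simp add: algebra_simps)
      finally have wb: "norm w \<le> (1 + norm b / d) * norm x" .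
      have "\<bar>representation (insert b F) x v\<bar> = \<bar>representation F w v\<bar>"
        using representation_insert[OF insert.prems insert.hyps(2) w] False by (simp add: xe)
      also have "\<dots> \<le> C' * norm w" using C'(2)[OF w] by simp
      also have "\<dots> \<le> C' * ((1 + norm b / d) * norm x)" using wb C'(1) by (rule mult_left_mono)
      also have "\<dots> \<le> C * norm x" unfolding C_def
        by (metis max.cobounded2 mult.assoc mult_right_mono norm_ge_zero)
      finally show ?thesis .
    qed
  qed
  moreover have "C \<ge> 0" using dpos by (simp add: C_def le_max_iff_disj)
  ultimately show ?case by blast
qed

text \<open>If linear maps converge pointwise to the identity, then eventually they are injective on any
  given finite-dimensional subspace: on it they are uniformly close to the identity.\<close>
lemma eventually_injective_on_finite_span:
  fixes P :: "nat \<Rightarrow> 'a::real_normed_vector \<Rightarrow> 'a"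
  assumes fW: "finite W" and lin: "\<And>n. linear (P n)" and conv: "\<And>y. (\<lambda>n. P n y) \<longlonglongrightarrow> y"
  shows "\<exists>n. \<forall>m\<in>span W. P n m = 0 \<longrightarrow> m = 0"
proof -
  obtain B where B: "B \<subseteq> W" "independent B" "W \<subseteq> span B"
    using maximal_independent_subset[of W] by blast
  have fB: "finite B" using B(1) fW finite_subset by blast
  have spB: "span B = span W" using B by (metis span_eq span_superset subset_trans)
  obtain C where C: "C \<ge> 0" "\<And>m v. m \<in> span B \<Longrightarrow> \<bar>representation B m v\<bar> \<le> C * norm m"
    using representation_bounded[OF fB B(2)] by blast
  define g where "g n = (\<Sum>w\<in>B. norm (P n w - w))" for n
  have "g \<longlonglongrightarrow> (\<Sum>w\<in>B. norm (w - w))" unfolding g_def by (intro tendsto_intros conv)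
  then have "g \<longlonglongrightarrow> 0" by simp
  then obtain n where gn: "\<bar>g n\<bar> < 1 / (C + 1)"
    using LIMSEQ_D[of g 0 "1 / (C + 1)"] C(1) by force
  have Cg: "C * g n < 1"
  proof -
    have "g n \<ge> 0" unfolding g_def by (simp add: sum_nonneg)
    then have "C * g n \<le> (C + 1) * \<bar>g n\<bar>" by (simp add: algebra_simps)
    also have "\<dots> < 1" using gn C(1) by (simp add: field_simps)
    finally show ?thesis .
  qed
  have "m = 0" if m: "m \<in> span W" and Pm: "P n m = 0" for m
  proof (rule ccontr)
    assume "m \<noteq> 0"
    have mB: "m \<in> span B" using m spB by simp
    have me: "m = (\<Sum>w\<in>B. representation B m w *\<^sub>R w)"
      using sum_representation_eq[OF B(2) mB fB subset_refl] by simp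
    have "P n m - m = (\<Sum>w\<in>B. representation B m w *\<^sub>R (P n w - w))"
      by (subst (1 2) me)
        (simp add: linear_sum[OF lin] linear_scale[OF lin] scaleR_diff_right sum_subtractf)
    moreover have "norm m = norm (P n m - m)" using Pm by simp
    ultimately have "norm m = norm (\<Sum>w\<in>B. representation B m w *\<^sub>R (P n w - w))"
      by simp
    also have "\<dots> \<le> (\<Sum>w\<in>B. \<bar>representation B m w\<bar> * norm (P n w - w))"
      by (rule order_trans[OF norm_sum]) simp
    also have "\<dots> \<le> (\<Sum>w\<in>B. C * norm m * norm (P n w - w))"
      by (intro sum_mono mult_right_mono C(2)[OF mB]) simp
    also have "\<dots> = (C * g n) * norm m" by (simp add: g_def sum_distrib_left mult_ac)
    also have "\<dots> < norm m" using Cg \<open>m \<noteq> 0\<close> by simp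
    finally show False by simp
  qed
  then show ?thesis by blast
qed

text \<open>A bounded finite-rank operator P yields separating functionals: if P x is not in the span of
  the image of V, take the coordinate of P x with respect to a basis of the range extending a basis
  of that image, composed with P.\<close>
lemma finite_rank_separating_functional:
  fixes P :: "'a::real_normed_vector \<Rightarrow> 'a"
  assumes blP: "bounded_linear P" and fB: "finite B" and rB: "range P \<subseteq> span B"
    and fV: "finite V" and sep: "P x \<notin> span (P ` V)"
  shows "\<exists>\<phi>::'a \<Rightarrow> real. bounded_linear \<phi> \<and> (\<forall>v\<in>V. \<phi> v = 0) \<and> \<phi> x = 1"
proof -
  define u where "u = P x"
  obtain G where G: "G \<subseteq> P ` V" "independent G" "P ` V \<subseteq> span G"
    using maximal_independent_subset[of "P ` V"] by blast
  have spG: "span G = span (P ` V)" using G by (metis span_eq span_superset subset_trans)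
  have uG: "u \<notin> span G" using sep spG by (simp add: u_def)
  have "independent (insert u G)" using G(2) uG by (simp add: independent_insert)
  then obtain H where H: "insert u G \<subseteq> H" "H \<subseteq> insert u G \<union> B" "independent H"
      "insert u G \<union> B \<subseteq> span H"
    using maximal_independent_subset_extend[of "insert u G" "insert u G \<union> B"] by blast
  have "finite (insert u G \<union> B)" using finite_subset[OF G(1)] fV fB by simp
  then have fH: "finite H" using H(2) finite_subset by blast
  obtain C where C: "C \<ge> 0" "\<And>m w. m \<in> span H \<Longrightarrow> \<bar>representation H m w\<bar> \<le> C * norm m"
    using representation_bounded[OF fH H(3)] by blast
  have "span B \<subseteq> span H" using H(4) by (meson le_sup_iff span_minimal subspace_span)
  then have PH: "P y \<in> span H" for y using rB by auto
  obtain K where K: "\<And>y. norm (P y) \<le> norm y * K"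
    using bounded_linear.bounded[OF blP] by blast
  define \<phi> where "\<phi> y = representation H (P y) u" for y
  have "bounded_linear \<phi>"
  proof (rule bounded_linear_intro)
    note lin = bounded_linear.linear[OF blP]
    show "\<phi> (a + b) = \<phi> a + \<phi> b" for a b
      unfolding \<phi>_def linear_add[OF lin] using representation_add[OF H(3) PH PH] by simp
    show "\<phi> (r *\<^sub>R a) = r *\<^sub>R \<phi> a" for r a
      unfolding \<phi>_def linear_scale[OF lin] using representation_scale[OF H(3) PH] by simp
    show "norm (\<phi> a) \<le> norm a * (C * K)" for a
    proof -
      have "norm (\<phi> a) \<le> C * norm (P a)" using C(2)[OF PH] by (simp add: \<phi>_def)
      also have "\<dots> \<le> C * (norm a * K)" using K C(1) by (rule mult_left_mono)
      finally show ?thesis by (simp add: mult_ac)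
    qed
  qed
  moreover have "\<phi> v = 0" if "v \<in> V" for v
  proof -
    have "P v \<in> span G" using that G(3) by auto
    then have "representation H (P v) = representation G (P v)"
      using representation_extend[OF H(3)] H(1) by auto
    moreover have "u \<notin> G" using uG span_base by blast
    ultimately show ?thesis unfolding \<phi>_def using representation_ne_zero by metis
  qed
  moreover have "\<phi> x = 1"
    using H(1) representation_basis[OF H(3)] by (simp add: \<phi>_def u_def)
  ultimately show ?thesis by blast
qed

text \<open>In a space admitting bounded finite-rank approximations of the identity, every vector outside
  a finite-dimensional subspace is separated from it by a bounded functional.\<close>
lemma separating_functional:
  fixes P :: "nat \<Rightarrow> 'a::real_normed_vector \<Rightarrow> 'a" and B :: "nat \<Rightarrow> 'a set"
  assumes blP: "\<And>n. bounded_linear (P n)"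
    and fB: "\<And>n. finite (B n)" and rB: "\<And>n. range (P n) \<subseteq> span (B n)"
    and conv: "\<And>y. (\<lambda>n. P n y) \<longlonglongrightarrow> y"
    and fV: "finite V" and xV: "x \<notin> span V"
  shows "\<exists>\<phi>::'a \<Rightarrow> real. bounded_linear \<phi> \<and> (\<forall>v\<in>V. \<phi> v = 0) \<and> \<phi> x = 1"
proof -
  have lin: "linear (P n)" for n using blP bounded_linear.linear by blast
  obtain n where inj: "\<And>m. m \<in> span (insert x V) \<Longrightarrow> P n m = 0 \<Longrightarrow> m = 0"
    using eventually_injective_on_finite_span[OF _ lin conv, of "insert x V"] fV by auto
  have "P n x \<notin> span (P n ` V)"
  proof
    assume "P n x \<in> span (P n ` V)"
    then obtain v where v: "v \<in> span V" "P n v = P n x"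
      by (auto simp: span_linear_image[OF lin])
    have "x - v \<in> span (insert x V)"
      using v(1) span_mono[of V "insert x V"] by (intro span_diff) (auto simp: span_base)
    moreover have "P n (x - v) = 0" using v(2) by (simp add: linear_diff[OF lin])
    ultimately have "x = v" using inj by force
    then show False using v(1) xV by simp
  qed
  then show ?thesis by (rule finite_rank_separating_functional[OF blP fB rB fV])
qed

definition fdd_partial_sum :: "(nat \<Rightarrow> 'a::real_vector \<Rightarrow> 'a) \<Rightarrow> nat \<Rightarrow> 'a \<Rightarrow> 'a" where
  "fdd_partial_sum Q n y = (\<Sum>j\<in>{1..n}. Q j y)"

definition fdd_finite_vectors :: "(nat \<Rightarrow> 'a::real_vector \<Rightarrow> 'a) \<Rightarrow> 'a set" where
  "fdd_finite_vectors Q = {y. \<exists>n. y = fdd_partial_sum Q n y}"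

lemma is_FDD_D:
  assumes "is_FDD Q"
  shows is_FDD_bounded_linear: "j \<ge> 1 \<Longrightarrow> bounded_linear (Q j)"
    and is_FDD_idem: "j \<ge> 1 \<Longrightarrow> Q j (Q j y) = Q j y"
    and is_FDD_orth: "i \<ge> 1 \<Longrightarrow> j \<ge> 1 \<Longrightarrow> i \<noteq> j \<Longrightarrow> Q i (Q j y) = 0"
    and is_FDD_finite_rank: "j \<ge> 1 \<Longrightarrow> \<exists>B. finite B \<and> range (Q j) \<subseteq> span B"
    and is_FDD_tendsto: "(\<lambda>n. \<Sum>j\<in>{1..n}. Q j y) \<longlonglongrightarrow> y"
  using assms unfolding is_FDD_def by (metis comp_apply)+

lemma fdd_partial_sum_bounded_linear:
  assumes "is_FDD Q"
  shows "bounded_linear (fdd_partial_sum Q n)"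
  unfolding fdd_partial_sum_def by (intro bounded_linear_sum is_FDD_bounded_linear[OF assms]) simp

lemma fdd_partial_sum_tendsto:
  assumes "is_FDD Q"
  shows "(\<lambda>n. fdd_partial_sum Q n y) \<longlonglongrightarrow> y"
  unfolding fdd_partial_sum_def by (rule is_FDD_tendsto[OF assms])

lemma fdd_partial_sum_finite_rank:
  assumes "is_FDD Q"
  obtains B where "\<And>n. finite (B n)" "\<And>n. range (fdd_partial_sum Q n) \<subseteq> span (B n)"
proof -
  have "\<forall>j. \<exists>B. j \<ge> 1 \<longrightarrow> finite B \<and> range (Q j) \<subseteq> span B"
    using is_FDD_finite_rank[OF assms] by blast
  then obtain Bq where Bq: "\<And>j. j \<ge> 1 \<Longrightarrow> finite (Bq j) \<and> range (Q j) \<subseteq> span (Bq j)"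
    by metis
  define B where "B n = (\<Union>j\<in>{1..n}. Bq j)" for n
  have "finite (B n)" for n using Bq by (simp add: B_def)
  moreover have "range (fdd_partial_sum Q n) \<subseteq> span (B n)" for n
  proof -
    have "Q j y \<in> span (B n)" if "j \<in> {1..n}" for j y
    proof -
      have "Q j y \<in> span (Bq j)" using Bq[of j] that by auto
      moreover have "span (Bq j) \<subseteq> span (B n)" using that by (intro span_mono) (auto simp: B_def)
      ultimately show ?thesis by blast
    qed
    then show ?thesis unfolding fdd_partial_sum_def by (auto intro: span_sum)
  qed
  ultimately show ?thesis using that by blast
qed

lemma fdd_partial_sum_absorb:
  assumes "is_FDD Q" and "n \<le> m"
  shows "fdd_partial_sum Q m (fdd_partial_sum Q n y) = fdd_partial_sum Q n y"
proof -
  have lin: "linear (Q i)" if "i \<ge> 1" for i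
    using is_FDD_bounded_linear[OF assms(1) that] by (rule bounded_linear.linear)
  have orth: "Q i (Q j y) = (if i = j then Q j y else 0)" if "i \<ge> 1" "j \<ge> 1" for i j
    using is_FDD_idem[OF assms(1)] is_FDD_orth[OF assms(1)] that by simp
  have "Q i (fdd_partial_sum Q n y) = (if i \<le> n then Q i y else 0)" if "i \<ge> 1" for i
  proof -
    have "Q i (fdd_partial_sum Q n y) = (\<Sum>j\<in>{1..n}. Q i (Q j y))"
      unfolding fdd_partial_sum_def using lin[OF that] by (rule linear_sum)
    also have "\<dots> = (\<Sum>j\<in>{1..n}. if i = j then Q j y else 0)"
      using orth[OF that] by (intro sum.cong) auto
    finally show ?thesis using that by simp
  qed
  then have "fdd_partial_sum Q m (fdd_partial_sum Q n y) = (\<Sum>j\<in>{1..m}. if j \<le> n then Q j y else 0)"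
    unfolding fdd_partial_sum_def[of Q m] by (intro sum.cong) auto
  also have "\<dots> = (\<Sum>j\<in>{j\<in>{1..m}. j \<le> n}. Q j y)"
    by (rule sum.inter_filter[symmetric]) simp
  also have "{j\<in>{1..m}. j \<le> n} = {1..n}" using assms(2) by auto
  finally show ?thesis by (simp add: fdd_partial_sum_def)
qed

lemma fdd_finite_vectors_subspace:
  assumes "is_FDD Q"
  shows "subspace (fdd_finite_vectors Q)"
  unfolding subspace_def
proof (intro conjI ballI allI)
  let ?P = "fdd_partial_sum Q"
  have lin: "linear (?P n)" for n
    using fdd_partial_sum_bounded_linear[OF assms] by (rule bounded_linear.linear)
  have mono: "y = ?P m y" if "y = ?P n y" "n \<le> m" for y n m
    using fdd_partial_sum_absorb[OF assms that(2), of y] that(1) by simp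
  have "0 = ?P 0 0" by (simp add: fdd_partial_sum_def)
  then show "0 \<in> fdd_finite_vectors Q" unfolding fdd_finite_vectors_def by blast
  fix a b c assume "a \<in> fdd_finite_vectors Q" "b \<in> fdd_finite_vectors Q"
  then obtain n1 n2 where "a = ?P n1 a" "b = ?P n2 b" unfolding fdd_finite_vectors_def by blast
  then have "a = ?P (max n1 n2) a" "b = ?P (max n1 n2) b" using mono by auto
  then have "a + b = ?P (max n1 n2) (a + b)" "c *\<^sub>R a = ?P (max n1 n2) (c *\<^sub>R a)"
    by (simp_all add: linear_add[OF lin] linear_scale[OF lin])
  then show "a + b \<in> fdd_finite_vectors Q" "c *\<^sub>R a \<in> fdd_finite_vectors Q"
    unfolding fdd_finite_vectors_def by blast+
qed

lemma fdd_finite_vectors_dense: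
  assumes "is_FDD Q" and "e > 0"
  shows "\<exists>f\<in>fdd_finite_vectors Q. norm (f - z) < e"
proof -
  obtain n where "norm (fdd_partial_sum Q n z - z) < e"
    using LIMSEQ_D[OF fdd_partial_sum_tendsto[OF assms(1)] assms(2)] by blast
  moreover have "fdd_partial_sum Q n z \<in> fdd_finite_vectors Q"
    using fdd_partial_sum_absorb[OF assms(1) order_refl, of n z]
    unfolding fdd_finite_vectors_def by (blast intro: sym)
  ultimately show ?thesis by blast
qed

lemma fdd_separating_functional:
  fixes Q :: "nat \<Rightarrow> 'a::real_normed_vector \<Rightarrow> 'a"
  assumes "is_FDD Q" and "finite V" and "z \<notin> span V"
  shows "\<exists>\<psi>::'a \<Rightarrow> real. bounded_linear \<psi> \<and> (\<forall>v\<in>V. \<psi> v = 0) \<and> \<psi> z = 1"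
proof -
  obtain B where "\<And>n. finite (B n)" "\<And>n. range (fdd_partial_sum Q n) \<subseteq> span (B n)"
    using fdd_partial_sum_finite_rank[OF assms(1)] by blast
  then show ?thesis
    using separating_functional[OF fdd_partial_sum_bounded_linear[OF assms(1)] _ _
        fdd_partial_sum_tendsto[OF assms(1)] assms(2,3)] by blast
qed

lemma rational_combination_approx:
  fixes B :: "'a::real_normed_vector set"
  assumes fB: "finite B" and e: "e > 0"
  shows "\<exists>q\<in>PiE B (\<lambda>_. \<rat>). norm ((\<Sum>b\<in>B. u b *\<^sub>R b) - (\<Sum>b\<in>B. q b *\<^sub>R b)) < e"
proof -
  define \<eta> where "\<eta> b = e / ((card B + 1) * (norm b + 1))" for b :: 'a
  have \<eta>pos: "\<eta> b > 0" for b
    using e unfolding \<eta>_def by (intro divide_pos_pos mult_pos_pos) (auto simp: add_nonneg_pos)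
  have "\<exists>r\<in>\<rat>. u b - \<eta> b < r \<and> r < u b + \<eta> b" for b
    by (rule Rats_dense_in_real) (use \<eta>pos[of b] in simp)
  then obtain q where "\<And>b. q b \<in> \<rat> \<and> u b - \<eta> b < q b \<and> q b < u b + \<eta> b" by metis
  then have q: "\<And>b. q b \<in> \<rat>" "\<And>b. \<bar>u b - q b\<bar> < \<eta> b" by (simp_all add: abs_less_iff) (smt (verit))
  have term_bound: "\<bar>u b - q b\<bar> * norm b \<le> e / (card B + 1)" for b
  proof -
    have "\<bar>u b - q b\<bar> * norm b \<le> \<eta> b * (norm b + 1)"
      using q(2)[of b] by (intro mult_mono) auto
    also have "\<dots> = e / (card B + 1)"
    proof -
      have "norm b + 1 \<noteq> 0" using norm_ge_zero[of b] by linarith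
      then show ?thesis unfolding \<eta>_def by (simp add: divide_simps)
    qed
    finally show ?thesis .
  qed
  have "norm ((\<Sum>b\<in>B. u b *\<^sub>R b) - (\<Sum>b\<in>B. q b *\<^sub>R b)) = norm (\<Sum>b\<in>B. (u b - q b) *\<^sub>R b)"
    by (simp add: sum_subtractf scaleR_diff_left)
  also have "\<dots> \<le> (\<Sum>b\<in>B. \<bar>u b - q b\<bar> * norm b)" by (rule order_trans[OF norm_sum]) simp
  also have "\<dots> \<le> card B * (e / (card B + 1))" using sum_mono[OF term_bound] by simp
  also have "\<dots> < e" using e by (simp add: field_simps)
  finally have "norm ((\<Sum>b\<in>B. u b *\<^sub>R b) - (\<Sum>b\<in>B. restrict q B b *\<^sub>R b)) < e" by simp
  moreover have "restrict q B \<in> PiE B (\<lambda>_. \<rat>)" using q(1) by simp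
  ultimately show ?thesis by blast
qed

text \<open>The space of an FDD is separable: rational combinations of the finite sets spanning the
  ranges of the partial sums are dense.\<close>
lemma fdd_countable_dense:
  fixes Q :: "nat \<Rightarrow> 'a::real_normed_vector \<Rightarrow> 'a"
  assumes "is_FDD Q"
  obtains C :: "'a set" where "countable C" and "\<And>y e. e > 0 \<Longrightarrow> \<exists>c\<in>C. dist c y < e"
proof -
  obtain B where fB: "\<And>n. finite (B n)" and rB: "\<And>n. range (fdd_partial_sum Q n) \<subseteq> span (B n)"
    using fdd_partial_sum_finite_rank[OF assms] by blast
  define C where "C = (\<Union>n. (\<lambda>q. \<Sum>b\<in>B n. q b *\<^sub>R b) ` PiE (B n) (\<lambda>_. \<rat>))"
  have countable_coeffs: "countable (PiE (B n) (\<lambda>_. \<rat>))" for n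
    using fB countable_rat by (rule countable_PiE)
  then have "countable C" unfolding C_def
    by (intro countable_UN countable_image countable_coeffs) simp_all
  moreover have "\<exists>c\<in>C. dist c y < e" if e: "e > 0" for y e
  proof -
    obtain n where n: "norm (fdd_partial_sum Q n y - y) < e / 2"
      using LIMSEQ_D[OF fdd_partial_sum_tendsto[OF assms], of "e / 2" y] e by auto
    have "fdd_partial_sum Q n y \<in> span (B n)" using rB by blast
    then obtain u where u: "fdd_partial_sum Q n y = (\<Sum>b\<in>B n. u b *\<^sub>R b)"
      unfolding span_finite[OF fB] by blast
    obtain q where q: "q \<in> PiE (B n) (\<lambda>_. \<rat>)"
      "norm ((\<Sum>b\<in>B n. u b *\<^sub>R b) - (\<Sum>b\<in>B n. q b *\<^sub>R b)) < e / 2"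
      using rational_combination_approx[OF fB, of "e / 2" n u] e by auto
    have "(\<Sum>b\<in>B n. q b *\<^sub>R b) \<in> C" unfolding C_def using q(1) by blast
    moreover have "dist (\<Sum>b\<in>B n. q b *\<^sub>R b) y < e"
    proof -
      have "dist (\<Sum>b\<in>B n. q b *\<^sub>R b) y
            \<le> dist (\<Sum>b\<in>B n. q b *\<^sub>R b) (fdd_partial_sum Q n y) + dist (fdd_partial_sum Q n y) y"
        by (rule dist_triangle)
      also have "\<dots> < e / 2 + e / 2"
        using q(2) n unfolding u by (intro add_strict_mono) (simp_all add: dist_norm norm_minus_commute)
      finally show ?thesis by simp
    qed
    ultimately show ?thesis by blast
  qed
  ultimately show thesis by (rule that)
qed

lemma dense_sequence_in_subset:
  fixes C :: "'a::metric_space set"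
  assumes cC: "countable C" and dC: "\<And>y e. e > 0 \<Longrightarrow> \<exists>c\<in>C. dist c y < e" and X: "X \<noteq> {}"
  obtains x :: "nat \<Rightarrow> 'a" where "range x \<subseteq> X" and "X \<subseteq> closure (range x)"
proof -
  define I where "I = {(c, m). c \<in> C \<and> (\<exists>a\<in>X. dist a c < 1 / Suc m)}"
  define pick where "pick = (\<lambda>(c, m). SOME a. a \<in> X \<and> dist a c < 1 / Suc m)"
  have pick: "pick (c, m) \<in> X \<and> dist (pick (c, m)) c < 1 / Suc m" if "(c, m) \<in> I" for c m
  proof -
    have "\<exists>a. a \<in> X \<and> dist a c < 1 / Suc m" using that by (auto simp: I_def)
    then show ?thesis unfolding pick_def by (simp only: prod.case) (rule someI_ex)
  qed
  define A where "A = pick ` I"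
  have "I \<subseteq> C \<times> UNIV" by (auto simp: I_def)
  moreover have "countable (C \<times> (UNIV :: nat set))" using cC by simp
  ultimately have "countable I" by (rule countable_subset)
  then have cA: "countable A" unfolding A_def by simp
  have AX: "A \<subseteq> X" unfolding A_def using pick by force
  have dense: "\<exists>b\<in>A. dist b a < e" if a: "a \<in> X" and e: "e > 0" for a and e :: real
  proof -
    obtain m :: nat where m: "1 / Suc m < e / 2"
      using e by (metis half_gt_zero_iff nat_approx_posE of_nat_Suc)
    obtain c where c: "c \<in> C" "dist c a < 1 / Suc m" using dC[of "1 / Suc m" a] by auto
    have "(c, m) \<in> I" unfolding I_def using a c by (auto simp: dist_commute)
    then have "pick (c, m) \<in> A" "dist (pick (c, m)) c < 1 / Suc m" using pick by (auto simp: A_def)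
    moreover have "dist (pick (c, m)) a \<le> dist (pick (c, m)) c + dist c a" by (rule dist_triangle)
    ultimately have "dist (pick (c, m)) a < e" using c m by linarith
    then show ?thesis using \<open>pick (c, m) \<in> A\<close> by blast
  qed
  obtain a0 where "a0 \<in> X" using X by blast
  then have "A \<noteq> {}" using dense[of a0 1] by auto
  then have rA: "range (from_nat_into A) = A" by (rule range_from_nat_into[OF _ cA])
  have "X \<subseteq> closure (range (from_nat_into A))"
    using dense by (auto simp: rA closure_approachable)
  then show thesis using AX rA by (intro that[of "from_nat_into A"]) simp_all
qed

lemma fdd_dense_sequence:
  fixes Q :: "nat \<Rightarrow> 'a::real_normed_vector \<Rightarrow> 'a"
  assumes "is_FDD Q" and "X \<noteq> {}"
  obtains x :: "nat \<Rightarrow> 'a" where "range x \<subseteq> X" and "X \<subseteq> closure (range x)"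
proof -
  obtain C :: "'a set" where "countable C" "\<And>y e. e > 0 \<Longrightarrow> \<exists>c\<in>C. dist c y < e"
    using fdd_countable_dense[OF assms(1)] by blast
  moreover note assms(2)
  ultimately obtain x :: "nat \<Rightarrow> 'a" where "range x \<subseteq> X" "X \<subseteq> closure (range x)"
    by (rule dense_sequence_in_subset) blast
  then show thesis by (rule that)
qed

text \<open>A linear map within kappa < 1 of the identity on a Banach space is onto: S y = c is the fixed
  point equation of the contraction y \<mapsto> c + y - S y.\<close>
lemma near_identity_surj:
  fixes S :: "'a::banach \<Rightarrow> 'a"
  assumes lin: "linear S" and \<kappa>: "0 \<le> \<kappa>" "\<kappa> < 1"
    and near: "\<And>y. norm (S y - y) \<le> \<kappa> * norm y"
  shows "surj S"
proof -
  have "\<exists>y. S y = c" for c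
  proof -
    define f where "f y = c + y - S y" for y
    have "dist (f y) (f z) \<le> \<kappa> * dist y z" for y z
    proof -
      have "f y - f z = - (S (y - z) - (y - z))"
        by (simp add: f_def linear_diff[OF lin] algebra_simps)
      then show ?thesis using near[of "y - z"] by (simp add: dist_norm norm_minus_commute)
    qed
    then obtain y where "f y = y" using banach_fix_type[OF \<kappa>] by blast
    then show ?thesis by (auto simp: f_def algebra_simps)
  qed
  then show ?thesis by (metis surjI)
qed

lemma near_identity_invertible:
  fixes S :: "'a::banach \<Rightarrow> 'a"
  assumes lin: "linear S" and \<kappa>: "0 \<le> \<kappa>" "\<kappa> < 1"
    and near: "\<And>y. norm (S y - y) \<le> \<kappa> * norm y"
  shows "bounded_linear S" and "bij S" and "bounded_linear (inv S)"
    and "onorm (\<lambda>y. inv S y - y) \<le> \<kappa> / (1 - \<kappa>)"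
proof -
  show "bounded_linear S"
  proof (rule bounded_linear_intro[where K = "1 + \<kappa>"])
    show "S (a + b) = S a + S b" "S (r *\<^sub>R a) = r *\<^sub>R S a" for a b r
      using lin by (simp_all add: linear_add linear_scale)
    show "norm (S a) \<le> norm a * (1 + \<kappa>)" for a
      using norm_triangle_ineq[of "S a - a" a] near[of a] by (simp add: algebra_simps)
  qed
  have lower: "(1 - \<kappa>) * norm y \<le> norm (S y)" for y
    using norm_triangle_ineq4[of "S y" "S y - y"] near[of y] by (simp add: algebra_simps)
  have "inj S"
  proof (rule injI)
    fix y z assume "S y = S z"
    then have "(1 - \<kappa>) * norm (y - z) \<le> 0" using lower[of "y - z"] by (simp add: linear_diff[OF lin])
    then show "y = z" using \<kappa> by (simp add: mult_le_0_iff)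
  qed
  moreover have "surj S" by (rule near_identity_surj[OF lin \<kappa> near])
  ultimately show bij: "bij S" by (simp add: bij_def)
  have S_inv: "S (inv S y) = y" for y using bij by (simp add: bij_is_surj surj_f_inv_f)
  have inv_bound: "norm (inv S y) \<le> norm y / (1 - \<kappa>)" for y
    using lower[of "inv S y"] \<kappa> by (simp add: S_inv field_simps)
  show "bounded_linear (inv S)"
  proof (rule bounded_linear_intro[where K = "1 / (1 - \<kappa>)"])
    show "inv S (a + b) = inv S a + inv S b" "inv S (r *\<^sub>R a) = r *\<^sub>R inv S a" for a b r
      by (metis S_inv \<open>inj S\<close> injD lin linear_add linear_scale)+
    show "norm (inv S a) \<le> norm a * (1 / (1 - \<kappa>))" for a using inv_bound[of a] by simp
  qed
  have "norm (inv S y - y) \<le> \<kappa> / (1 - \<kappa>) * norm y" for y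
  proof -
    have "norm (inv S y - y) = norm (S (inv S y) - inv S y)" by (simp add: S_inv norm_minus_commute)
    also have "\<dots> \<le> \<kappa> * (norm y / (1 - \<kappa>))"
      using near[of "inv S y"] mult_left_mono[OF inv_bound \<kappa>(1)] by (rule order_trans)
    finally show ?thesis by simp
  qed
  then show "onorm (\<lambda>y. inv S y - y) \<le> \<kappa> / (1 - \<kappa>)"
    using \<kappa> by (intro onorm_bound) simp_all
qed

lemma rank_one_series_operator:
  fixes \<phi> :: "nat \<Rightarrow> 'a::real_normed_vector \<Rightarrow> real" and d :: "nat \<Rightarrow> 'b::banach"
  assumes lin: "\<And>i. linear (\<phi> i)"
    and small: "\<And>i y. \<bar>\<phi> i y\<bar> * norm (d i) \<le> \<kappa> * (1/2) ^ Suc i * norm y"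
  shows "\<And>y. summable (\<lambda>i. \<phi> i y *\<^sub>R d i)"
    and "linear (\<lambda>y. \<Sum>i. \<phi> i y *\<^sub>R d i)"
    and "\<And>y. norm (\<Sum>i. \<phi> i y *\<^sub>R d i) \<le> \<kappa> * norm y"
proof -
  have geom: "(\<lambda>i. \<kappa> * (1/2) ^ Suc i * norm y) sums (\<kappa> * norm y)" for y
    using sums_mult[OF power_half_series, of "\<kappa> * norm y"] by (simp add: mult_ac)
  have norm_summable: "summable (\<lambda>i. norm (\<phi> i y *\<^sub>R d i))" for y
    by (rule summable_comparison_test'[OF sums_summable[OF geom[of y]], of 0]) (use small in simp)
  show summable: "summable (\<lambda>i. \<phi> i y *\<^sub>R d i)" for y
    by (rule summable_norm_cancel[OF norm_summable])
  show "linear (\<lambda>y. \<Sum>i. \<phi> i y *\<^sub>R d i)"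
  proof (rule linearI)
    show "(\<Sum>i. \<phi> i (a + b) *\<^sub>R d i) = (\<Sum>i. \<phi> i a *\<^sub>R d i) + (\<Sum>i. \<phi> i b *\<^sub>R d i)" for a b
      by (simp add: linear_add[OF lin] scaleR_add_left suminf_add[OF summable summable])
    show "(\<Sum>i. \<phi> i (r *\<^sub>R a) *\<^sub>R d i) = r *\<^sub>R (\<Sum>i. \<phi> i a *\<^sub>R d i)" for r a
      using suminf_scaleR_right[OF summable, of r a] by (simp add: linear_scale[OF lin])
  qed
  show "norm (\<Sum>i. \<phi> i y *\<^sub>R d i) \<le> \<kappa> * norm y" for y
  proof -
    have "norm (\<Sum>i. \<phi> i y *\<^sub>R d i) \<le> (\<Sum>i. norm (\<phi> i y *\<^sub>R d i))"
      by (rule summable_norm[OF norm_summable])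
    also have "\<dots> \<le> (\<Sum>i. \<kappa> * (1/2) ^ Suc i * norm y)"
      using small by (intro suminf_le norm_summable sums_summable[OF geom]) simp
    also have "\<dots> = \<kappa> * norm y" by (rule sums_unique[OF geom, symmetric])
    finally show ?thesis .
  qed
qed

lemma triangular_functionals:
  fixes x :: "nat \<Rightarrow> 'a::real_normed_vector"
  assumes sep: "\<And>V z. finite V \<Longrightarrow> z \<notin> span V \<Longrightarrow>
      \<exists>\<psi>::'a \<Rightarrow> real. bounded_linear \<psi> \<and> (\<forall>v\<in>V. \<psi> v = 0) \<and> \<psi> z = 1"
  obtains \<phi> :: "nat \<Rightarrow> 'a \<Rightarrow> real"
  where "\<And>k. bounded_linear (\<phi> k)" and "\<And>i k. k < i \<Longrightarrow> \<phi> i (x k) = 0"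
    and "\<And>k. x k \<notin> span (x ` {..<k}) \<Longrightarrow> \<phi> k (x k) = 1"
proof -
  have "\<exists>\<psi>::'a \<Rightarrow> real. bounded_linear \<psi> \<and> (\<forall>v\<in>x ` {..<k}. \<psi> v = 0) \<and>
          (x k \<notin> span (x ` {..<k}) \<longrightarrow> \<psi> (x k) = 1)" for k
  proof (cases "x k \<in> span (x ` {..<k})")
    case True
    then show ?thesis using bounded_linear_zero by fastforce
  next
    case False
    then show ?thesis using sep[of "x ` {..<k}" "x k"] by auto
  qed
  then obtain \<phi> :: "nat \<Rightarrow> 'a \<Rightarrow> real" where \<phi>: "\<And>k. bounded_linear (\<phi> k)"
      "\<And>k. \<forall>v\<in>x ` {..<k}. \<phi> k v = 0" "\<And>k. x k \<notin> span (x ` {..<k}) \<Longrightarrow> \<phi> k (x k) = 1"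
    by metis
  show thesis by (rule that[of \<phi>]) (use \<phi> in auto)
qed

text \<open>Course-of-values recursion: each correction vector may depend on all earlier ones through
  the partial sum of the series defining the perturbation.\<close>
lemma triangular_recursion:
  fixes g :: "nat \<Rightarrow> 'a::real_vector \<Rightarrow> 'a" and \<phi> :: "nat \<Rightarrow> 'a \<Rightarrow> real"
  obtains d where "\<And>k. d k = g k (x k + (\<Sum>i<k. \<phi> i (x k) *\<^sub>R d i))"
proof -
  define partial where
    "partial = rec_nat (\<lambda>_. 0) (\<lambda>k p y. p y + \<phi> k y *\<^sub>R g k (x k + p (x k)))"
  define d where "d k = g k (x k + partial k (x k))" for k
  have step: "partial (Suc k) y = partial k y + \<phi> k y *\<^sub>R d k" for k y
    by (simp add: partial_def d_def)
  have partial_sum: "partial k y = (\<Sum>i<k. \<phi> i y *\<^sub>R d i)" for k y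
  proof (induction k)
    case 0
    then show ?case by (simp add: partial_def)
  next
    case (Suc k)
    then show ?case by (simp add: step)
  qed
  have "d k = g k (x k + (\<Sum>i<k. \<phi> i (x k) *\<^sub>R d i))" for k
    by (simp only: d_def[of k] partial_sum)
  then show thesis by (rule that)
qed

lemma dense_corrections:
  assumes dense: "\<And>z e. e > 0 \<Longrightarrow> \<exists>f\<in>F. norm (f - z) < e" and \<epsilon>: "\<And>k. \<epsilon> k > 0"
  obtains g :: "'i \<Rightarrow> 'a::real_normed_vector \<Rightarrow> 'a"
  where "\<And>k z. z + g k z \<in> F" and "\<And>k z. norm (g k z) < \<epsilon> k"
proof -
  have approx: "\<exists>c. z + c \<in> F \<and> norm c < \<epsilon> k" for k z
  proof -
    obtain f where "f \<in> F" "norm (f - z) < \<epsilon> k" using dense[OF \<epsilon>[of k]] by blast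
    then show ?thesis by (intro exI[of _ "f - z"]) simp
  qed
  define g where "g k z = (SOME c. z + c \<in> F \<and> norm c < \<epsilon> k)" for k z
  have "z + g k z \<in> F" "norm (g k z) < \<epsilon> k" for k z
    using someI_ex[OF approx[of z k]] by (simp_all add: g_def)
  then show thesis by (rule that)
qed

text \<open>To map the span of a sequence into a subspace by a linear map it suffices to map the terms
  that are not in the span of their predecessors: the others are combinations of earlier terms.\<close>
lemma span_sequence_into_subspace:
  fixes x :: "nat \<Rightarrow> 'a::real_vector" and S :: "'a \<Rightarrow> 'b::real_vector"
  assumes lin: "linear S" and F: "subspace F"
    and new: "\<And>k. x k \<notin> span (x ` {..<k}) \<Longrightarrow> S (x k) \<in> F"
    and z: "z \<in> span (range x)"
  shows "S z \<in> F"
proof -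
  have S_x: "S (x k) \<in> F" for k
  proof (induction k rule: less_induct)
    case (less k)
    show ?case
    proof (cases "x k \<in> span (x ` {..<k})")
      case True
      then have "S (x k) \<in> span (S ` x ` {..<k})" by (simp add: span_linear_image[OF lin])
      also have "\<dots> \<subseteq> F" using less F by (intro span_minimal) auto
      finally show ?thesis .
    qed (rule new)
  qed
  have "S z \<in> span (S ` range x)" using z by (simp add: span_linear_image[OF lin])
  also have "\<dots> \<subseteq> F" using S_x F by (intro span_minimal) auto
  finally show ?thesis .
qed

text \<open>Correction vectors d k of norm at most kappa / (2^(k+1) N k), chosen
  recursively so that x k + sum (i<k) phi i (x k) d i + d k lies in F, define
  S y = y + sum i. phi i y d i. Triangularity of the phi gives S (x k) in F for every k, hence
  S maps the span of the sequence into F.\<close>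
lemma perturbation_into_dense_subspace:
  fixes x :: "nat \<Rightarrow> 'a::banach" and \<phi> :: "nat \<Rightarrow> 'a \<Rightarrow> real"
  assumes F: "subspace F" and dense: "\<And>z e. e > 0 \<Longrightarrow> \<exists>f\<in>F. norm (f - z) < e"
    and \<phi>_bl: "\<And>k. bounded_linear (\<phi> k)" and \<phi>_lower: "\<And>i k. k < i \<Longrightarrow> \<phi> i (x k) = 0"
    and \<phi>_diag: "\<And>k. x k \<notin> span (x ` {..<k}) \<Longrightarrow> \<phi> k (x k) = 1"
    and \<kappa>: "\<kappa> > 0"
  obtains S where "linear S" and "\<And>y. norm (S y - y) \<le> \<kappa> * norm y"
    and "\<And>z. z \<in> span (range x) \<Longrightarrow> S z \<in> F"
proof -
  define N where "N k = onorm (\<phi> k) + 1" for k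
  have N_pos: "N k > 0" for k using onorm_pos_le[OF \<phi>_bl[of k]] by (simp add: N_def)
  have \<phi>_N: "\<bar>\<phi> k y\<bar> \<le> N k * norm y" for k y
  proof -
    have "\<bar>\<phi> k y\<bar> \<le> onorm (\<phi> k) * norm y" using onorm[OF \<phi>_bl[of k], of y] by simp
    also have "\<dots> \<le> N k * norm y" by (simp add: N_def mult_right_mono)
    finally show ?thesis .
  qed
  define \<epsilon> where "\<epsilon> k = \<kappa> / (2 ^ Suc k * N k)" for k
  have "\<epsilon> k > 0" for k using \<kappa> N_pos[of k] by (simp add: \<epsilon>_def)
  then obtain g where gF: "\<And>k z. z + g k z \<in> F" and g_small: "\<And>k z. norm (g k z) < \<epsilon> k"
    using dense_corrections[where F = F, OF dense] by blast
  obtain d where d: "\<And>k. d k = g k (x k + (\<Sum>i<k. \<phi> i (x k) *\<^sub>R d i))"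
    using triangular_recursion[where g = g and x = x and \<phi> = \<phi>] by blast
  have d_small: "norm (d k) < \<epsilon> k" for k by (subst d) (rule g_small)
  have small: "\<bar>\<phi> i y\<bar> * norm (d i) \<le> \<kappa> * (1/2) ^ Suc i * norm y" for i y
  proof -
    have "\<bar>\<phi> i y\<bar> * norm (d i) \<le> (N i * norm y) * \<epsilon> i"
      using \<phi>_N[of i y] d_small[of i] by (intro mult_mono) auto
    also have "\<dots> = \<kappa> * (1/2) ^ Suc i * norm y"
      using N_pos[of i] by (simp add: \<epsilon>_def field_simps power_divide)
    finally show ?thesis .
  qed
  note K = rank_one_series_operator[OF bounded_linear.linear[OF \<phi>_bl] small]
  define S where "S y = y + (\<Sum>i. \<phi> i y *\<^sub>R d i)" for y
  have lin: "linear S"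
    unfolding S_def[abs_def] by (intro linear_compose_add K(2)) (simp add: linear_id[unfolded id_def])
  have S_x: "S (x k) = (x k + (\<Sum>i<k. \<phi> i (x k) *\<^sub>R d i)) + \<phi> k (x k) *\<^sub>R d k" for k
  proof -
    have "(\<Sum>i. \<phi> i (x k) *\<^sub>R d i) = (\<Sum>i<Suc k. \<phi> i (x k) *\<^sub>R d i)"
      by (rule suminf_finite) (auto simp: \<phi>_lower)
    then show ?thesis by (simp add: S_def)
  qed
  have S_new: "S (x k) \<in> F" if "x k \<notin> span (x ` {..<k})" for k
  proof -
    have "S (x k) = (x k + (\<Sum>i<k. \<phi> i (x k) *\<^sub>R d i)) + d k" using S_x[of k] \<phi>_diag[OF that] by simp
    also have "\<dots> \<in> F" by (subst d) (rule gF)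
    finally show ?thesis .
  qed
  show thesis
  proof (rule that[OF lin])
    show "norm (S y - y) \<le> \<kappa> * norm y" for y using K(3) by (simp add: S_def)
    show "S z \<in> F" if "z \<in> span (range x)" for z
      using span_sequence_into_subspace[OF lin F S_new that] .
  qed
qed

lemma density_condition_conjugate:
  fixes T :: "'a::real_normed_vector \<Rightarrow> 'a"
  assumes "bij T" and "linear T" and "D \<subseteq> X" and "X \<subseteq> closure D"
    and finite_expansion: "\<And>z. z \<in> D \<Longrightarrow> inv T z \<in> fdd_finite_vectors Q"
  shows "density_condition X (\<lambda>j. T \<circ> Q j \<circ> inv T)"
  unfolding density_condition_def
proof (intro exI[of _ D] conjI ballI)
  fix z assume "z \<in> D"
  then obtain n where n: "inv T z = fdd_partial_sum Q n (inv T z)"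
    using finite_expansion unfolding fdd_finite_vectors_def by blast
  have "(\<Sum>j\<in>{1..n}. (T \<circ> Q j \<circ> inv T) z) = T (fdd_partial_sum Q n (inv T z))"
    unfolding fdd_partial_sum_def o_def by (rule linear_sum[OF assms(2), symmetric])
  also have "\<dots> = z" using n \<open>bij T\<close> by (simp add: bij_is_surj surj_f_inv_f)
  finally show "\<exists>n. z = (\<Sum>j\<in>{1..n}. (T \<circ> Q j \<circ> inv T) z)" by metis
qed (use assms in auto)

theorem lemma3p1:
  fixes Q :: "nat \<Rightarrow> 'a::banach \<Rightarrow> 'a" and X :: "'a set" and \<delta> :: real
  assumes "is_FDD Q"
    and "subspace X" and "closed X"
    and "\<delta> > 0"
  shows "\<exists>T. bounded_linear T \<and> bij T \<and> bounded_linear (inv T) \<and>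
             onorm (\<lambda>y. T y - y) < \<delta> \<and>
             density_condition X (\<lambda>j. T \<circ> Q j \<circ> inv T)"
proof -
  obtain x :: "nat \<Rightarrow> 'a" where x_X: "range x \<subseteq> X" and x_dense: "X \<subseteq> closure (range x)"
    using fdd_dense_sequence[OF assms(1)] subspace_0[OF assms(2)] by blast
  obtain \<phi> :: "nat \<Rightarrow> 'a \<Rightarrow> real" where \<phi>: "\<And>k. bounded_linear (\<phi> k)"
      "\<And>i k. k < i \<Longrightarrow> \<phi> i (x k) = 0" "\<And>k. x k \<notin> span (x ` {..<k}) \<Longrightarrow> \<phi> k (x k) = 1"
    using triangular_functionals[OF fdd_separating_functional[OF assms(1)]] by blast
  define \<kappa> where "\<kappa> = min (1/2) (\<delta>/4)"
  have \<kappa>: "0 < \<kappa>" "\<kappa> < 1" "\<kappa> / (1 - \<kappa>) < \<delta>"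
    using assms(4) by (auto simp: \<kappa>_def min_def field_simps)
  obtain S where S: "linear S" "\<And>y. norm (S y - y) \<le> \<kappa> * norm y"
      and S_finite: "\<And>z. z \<in> span (range x) \<Longrightarrow> S z \<in> fdd_finite_vectors Q"
    using perturbation_into_dense_subspace[where x = x, OF fdd_finite_vectors_subspace[OF assms(1)]
        fdd_finite_vectors_dense[OF assms(1)] \<phi> \<kappa>(1)] by blast
  define T where "T = inv S"
  have "bounded_linear S" "bij S" "bounded_linear T" "onorm (\<lambda>y. T y - y) \<le> \<kappa> / (1 - \<kappa>)"
    using near_identity_invertible[OF S(1) less_imp_le[OF \<kappa>(1)] \<kappa>(2) S(2)] by (simp_all add: T_def)
  moreover have T_bij: "bij T" and inv_T: "inv T = S"
    using \<open>bij S\<close> by (simp_all add: T_def bij_imp_bij_inv inv_inv_eq)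
  moreover have "density_condition X (\<lambda>j. T \<circ> Q j \<circ> inv T)"
  proof (rule density_condition_conjugate[OF T_bij])
    show "linear T" using \<open>bounded_linear T\<close> by (rule bounded_linear.linear)
    show "span (range x) \<subseteq> X" using x_X assms(2) by (rule span_minimal)
    show "X \<subseteq> closure (span (range x))" using x_dense closure_mono[OF span_superset] by blast
    show "inv T z \<in> fdd_finite_vectors Q" if "z \<in> span (range x)" for z
      using S_finite[OF that] by (simp add: inv_T)
  qed
  ultimately show ?thesis using \<kappa>(3) by (intro exI[of _ T]) auto
qed

end
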